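(* Let $\mathcal L:\mathcal Y\times\mathbb R^d\to\mathbb R$ be continuously differentiable and $\mu$-strongly convex. Let $Q$ be a probability distribution over functions $g:\mathcal X\to\mathbb R^d$, fix $k\ge1$, and let $G=\{g_1,\dots,g_k\}\sim Q^k$ and $G'=\{g'_1,\dots,g'_k\}\sim Q^k$ be independent. Define \[ f_1=\arg\min_{f\in V(G)}\mathbb E[\mathcal L(y,f(x))],\qquad f_2=\arg\min_{f\in V(G')}\mathbb E[\mathcal L(y,f(x))]. \] Then \[ \mathbb E_{f_1,f_2}[D(f_1,f_2)]\le\frac8\mu\big(\bar R_k-\bar R_{2k}\big). \]
   Context: $P$ is a distribution on $\mathcal X\times\mathcal Y$; expectations are over $(x,y)\sim P$ unless indicated. $\mathcal L$ is $\mu$-strongly convex ($\mu>0$) if for all $y\in\mathcal Y$ and $P_1,P_2\in\mathbb R^d$: $\mathcal L(y,P_1)\ge\mathcal L(y,P_2)+\langle\nabla_p\mathcal L(y,P_2),P_1-P_2\rangle+\frac\mu2\|P_1-P_2\|_2^2$. For $f:\mathcal X\to\mathbb R^d$, $R(f)=\mathbb E[\mathcal L(y,f(x))]$, and $D(f_1,f_2)=\mathbb E[\|f_1(x)-f_2(x)\|_2^2]$. For a finite multiset $G$ of functions $\mathcal X\to\mathbb R^d$, $V(G)$ is their linear span (real coefficients) and $R(G)=\min_{f\in V(G)}R(f)$ (minimizers assumed to exist). $\bar R_t=\mathbb E[R(\{g_1,\dots,g_t\})]$ with $g_1,\dots,g_t$ i.i.d. from $Q$. The outer expectation in the conclusion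 is over $G,G'$. *)

theory Defs
  imports "HOL-Probability.Probability"
begin

definition strongly_convex_loss ::
  "real \<Rightarrow> ('y \<Rightarrow> 'v::real_inner \<Rightarrow> real) \<Rightarrow> ('y \<Rightarrow> 'v \<Rightarrow> 'v) \<Rightarrow> bool" where
  "strongly_convex_loss \<mu> L gL \<longleftrightarrow> \<mu> > 0 \<and>
     (\<forall>y p1 p2. L y p1 \<ge> L y p2 + inner (gL y p2) (p1 - p2) + \<mu> / 2 * (norm (p1 - p2))\<^sup>2)"

definition Vspan :: "nat \<Rightarrow> (nat \<Rightarrow> 'x \<Rightarrow> 'v::real_vector) \<Rightarrow> ('x \<Rightarrow> 'v) set" where
  "Vspan t G = {(\<lambda>x. \<Sum>i<t. c i *\<^sub>R G i x) | c. True}"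

definition risk :: "('x \<times> 'y) measure \<Rightarrow> ('y \<Rightarrow> 'v \<Rightarrow> real) \<Rightarrow> ('x \<Rightarrow> 'v) \<Rightarrow> real" where
  "risk P L f = (\<integral>z. L (snd z) (f (fst z)) \<partial>P)"

definition Dist :: "('x \<times> 'y) measure \<Rightarrow> ('x \<Rightarrow> 'v::real_normed_vector) \<Rightarrow> ('x \<Rightarrow> 'v) \<Rightarrow> real" where
  "Dist P f1 f2 = (\<integral>z. (norm (f1 (fst z) - f2 (fst z)))\<^sup>2 \<partial>P)"

definition riskV :: "('x \<times> 'y) measure \<Rightarrow> ('y \<Rightarrow> 'v::real_vector \<Rightarrow> real) \<Rightarrow> nat \<Rightarrow> (nat \<Rightarrow> 'x \<Rightarrow> 'v) \<Rightarrow> real" where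
  "riskV P L t G = Inf (risk P L ` Vspan t G)"

definition argminV :: "('x \<times> 'y) measure \<Rightarrow> ('y \<Rightarrow> 'v::real_vector \<Rightarrow> real) \<Rightarrow> nat \<Rightarrow> (nat \<Rightarrow> 'x \<Rightarrow> 'v) \<Rightarrow> ('x \<Rightarrow> 'v)" where
  "argminV P L t G = (SOME f. f \<in> Vspan t G \<and> (\<forall>h\<in>Vspan t G. risk P L f \<le> risk P L h))"

definition Rbar :: "('x \<times> 'y) measure \<Rightarrow> ('y \<Rightarrow> 'v::real_vector \<Rightarrow> real) \<Rightarrow> ('x \<Rightarrow> 'v) measure \<Rightarrow> nat \<Rightarrow> real" where
  "Rbar P L Q t = (\<integral>G. riskV P L t G \<partial>(PiM {..<t} (\<lambda>_. Q)))"

end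

(*
  Let f1 and f2 minimise the risk over V(G) and V(G'). Both lie in the span of the concatenated
  family G ++ G', hence so does their midpoint, whose risk is therefore at least R(G ++ G').
  The gradient inequality of strong convexity bounds the risk of the midpoint by
  (R(f1) + R(f2)) / 2 - mu / 8 * D(f1, f2), so D(f1, f2) <= 4 / mu * (R(G) + R(G') - 2 R(G ++ G')).
  Taking expectations gives the claim, since G and G' are distributed as Q^k and G ++ G' as Q^(2k).
*)

theory Submission
  imports Defs
begin

lemma VspanI: "f = (\<lambda>x. \<Sum>i<t. c i *\<^sub>R H i x) \<Longrightarrow> f \<in> Vspan t H"
  unfolding Vspan_def by blast

lemma VspanE:
  assumes "f \<in> Vspan t H"
  obtains c where "f = (\<lambda>x. \<Sum>i<t. c i *\<^sub>R H i x)"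
  using assms unfolding Vspan_def by blast

lemma Vspan_lincomb:
  assumes "f1 \<in> Vspan t H" "f2 \<in> Vspan t H"
  shows "(\<lambda>x. a *\<^sub>R f1 x + b *\<^sub>R f2 x) \<in> Vspan t H"
proof -
  obtain c1 where c1: "f1 = (\<lambda>x. \<Sum>i<t. c1 i *\<^sub>R H i x)"
    using assms(1) by (rule VspanE)
  obtain c2 where c2: "f2 = (\<lambda>x. \<Sum>i<t. c2 i *\<^sub>R H i x)"
    using assms(2) by (rule VspanE)
  show ?thesis
    by (rule VspanI[where c = "\<lambda>i. a * c1 i + b * c2 i"])
      (simp add: c1 c2 scaleR_sum_right scaleR_add_left sum.distrib)
qed

lemma Vspan_shift:
  assumes "j + s \<le> t" and "\<And>i. i < s \<Longrightarrow> H (j + i) = G i" and "f \<in> Vspan s G"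
  shows "f \<in> Vspan t H"
proof -
  obtain c where c: "f = (\<lambda>x. \<Sum>i<s. c i *\<^sub>R G i x)"
    using assms(3) by (rule VspanE)
  let ?c = "\<lambda>i. if j \<le> i \<and> i < j + s then c (i - j) else 0"
  have "f x = (\<Sum>i<t. ?c i *\<^sub>R H i x)" for x
  proof -
    have "(\<Sum>i<t. ?c i *\<^sub>R H i x) = (\<Sum>i\<in>{j..<j + s}. ?c i *\<^sub>R H i x)"
      by (rule sum.mono_neutral_right) (use assms(1) in auto)
    also have "\<dots> = (\<Sum>i<s. ?c (j + i) *\<^sub>R H (j + i) x)"
      by (rule sum.reindex_bij_witness[where i = "\<lambda>i. j + i" and j = "\<lambda>i. i - j"]) auto
    also have "\<dots> = f x"
      using assms(2) by (simp add: c)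
    finally show ?thesis by simp
  qed
  then show ?thesis
    by (intro VspanI) auto
qed

lemma strongly_convex_loss_midpoint:
  assumes "strongly_convex_loss \<mu> L gL"
  shows "L y ((1/2) *\<^sub>R a + (1/2) *\<^sub>R b) \<le> (L y a + L y b) / 2 - \<mu> / 8 * (norm (a - b))\<^sup>2"
proof -
  let ?m = "(1/2) *\<^sub>R a + (1/2) *\<^sub>R b" and ?h = "(1/2) *\<^sub>R (a - b)"
  have grad: "L y p \<ge> L y ?m + inner (gL y ?m) (p - ?m) + \<mu> / 2 * (norm (p - ?m))\<^sup>2" for p
    using assms unfolding strongly_convex_loss_def by blast
  have a: "a - ?m = ?h" and b: "b - ?m = - ?h"
    by (simp_all add: algebra_simps) (simp_all flip: scaleR_add_left)
  have norm_h: "\<mu> / 2 * (norm ?h)\<^sup>2 = \<mu> / 8 * (norm (a - b))\<^sup>2"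
    by (simp add: power2_eq_square)
  have "L y a \<ge> L y ?m + inner (gL y ?m) ?h + \<mu> / 8 * (norm (a - b))\<^sup>2"
    using grad[of a] unfolding a norm_h .
  moreover have "L y b \<ge> L y ?m - inner (gL y ?m) ?h + \<mu> / 8 * (norm (a - b))\<^sup>2"
    using grad[of b] unfolding b inner_minus_right norm_minus_cancel norm_h by simp
  ultimately show ?thesis
    by argo
qed

lemma risk_midpoint_le:
  assumes sc: "strongly_convex_loss \<mu> L gL"
    and int1: "integrable P (\<lambda>z. L (snd z) (f1 (fst z)))"
    and int2: "integrable P (\<lambda>z. L (snd z) (f2 (fst z)))"
    and int_mid: "integrable P (\<lambda>z. L (snd z) ((1/2) *\<^sub>R f1 (fst z) + (1/2) *\<^sub>R f2 (fst z)))"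
    and int_diff: "integrable P (\<lambda>z. (norm (f1 (fst z) - f2 (fst z)))\<^sup>2)"
  shows "risk P L (\<lambda>x. (1/2) *\<^sub>R f1 x + (1/2) *\<^sub>R f2 x)
    \<le> (risk P L f1 + risk P L f2) / 2 - \<mu> / 8 * Dist P f1 f2"
proof -
  have "risk P L (\<lambda>x. (1/2) *\<^sub>R f1 x + (1/2) *\<^sub>R f2 x)
      \<le> (\<integral>z. (L (snd z) (f1 (fst z)) + L (snd z) (f2 (fst z))) / 2
            - \<mu> / 8 * (norm (f1 (fst z) - f2 (fst z)))\<^sup>2 \<partial>P)"
    unfolding risk_def
    by (intro integral_mono strongly_convex_loss_midpoint[OF sc] int_mid) (use int1 int2 int_diff in auto)
  also have "\<dots> = (risk P L f1 + risk P L f2) / 2 - \<mu> / 8 * Dist P f1 f2"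
    unfolding risk_def Dist_def using int1 int2 int_diff by simp
  finally show ?thesis .
qed

lemma
  assumes "\<exists>f\<in>Vspan t G. \<forall>h\<in>Vspan t G. risk P L f \<le> risk P L h"
  shows argminV_in_Vspan: "argminV P L t G \<in> Vspan t G"
    and argminV_minimal: "h \<in> Vspan t G \<Longrightarrow> risk P L (argminV P L t G) \<le> risk P L h"
    and riskV_eq_risk_argminV: "riskV P L t G = risk P L (argminV P L t G)"
proof -
  have min: "argminV P L t G \<in> Vspan t G \<and> (\<forall>h\<in>Vspan t G. risk P L (argminV P L t G) \<le> risk P L h)"
    unfolding argminV_def using someI_ex[OF assms[unfolded Bex_def]] .
  then show "argminV P L t G \<in> Vspan t G" "h \<in> Vspan t G \<Longrightarrow> risk P L (argminV P L t G) \<le> risk P L h"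
    by auto
  show "riskV P L t G = risk P L (argminV P L t G)"
    unfolding riskV_def using min by (intro cInf_eq_minimum) auto
qed

(* undefined beyond m + n, so that the family is extensional, as elements of PiM {..<m + n} must be *)
definition concat_family :: "nat \<Rightarrow> nat \<Rightarrow> (nat \<Rightarrow> 'a) \<Rightarrow> (nat \<Rightarrow> 'a) \<Rightarrow> nat \<Rightarrow> 'a" where
  "concat_family m n G G' = (\<lambda>i. if i < m then G i else if i < m + n then G' (i - m) else undefined)"

lemma Dist_argminV_le_riskV_gap:
  assumes sc: "strongly_convex_loss \<mu> L gL"
    and integ: "\<And>f. f \<in> Vspan (m + n) (concat_family m n G G') \<Longrightarrow>
        integrable P (\<lambda>z. L (snd z) (f (fst z))) \<and> integrable P (\<lambda>z. (norm (f (fst z)))\<^sup>2)"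
    and min1: "\<exists>f\<in>Vspan m G. \<forall>h\<in>Vspan m G. risk P L f \<le> risk P L h"
    and min2: "\<exists>f\<in>Vspan n G'. \<forall>h\<in>Vspan n G'. risk P L f \<le> risk P L h"
    and min12: "\<exists>f\<in>Vspan (m + n) (concat_family m n G G').
        \<forall>h\<in>Vspan (m + n) (concat_family m n G G'). risk P L f \<le> risk P L h"
  shows "Dist P (argminV P L m G) (argminV P L n G')
    \<le> 4 / \<mu> * (riskV P L m G + riskV P L n G' - 2 * riskV P L (m + n) (concat_family m n G G'))"
proof -
  let ?H = "concat_family m n G G'"
  define f1 where "f1 = argminV P L m G"
  define f2 where "f2 = argminV P L n G'"
  have f1: "f1 \<in> Vspan (m + n) ?H"
    unfolding f1_def by (rule Vspan_shift[where j = 0, OF _ _ argminV_in_Vspan[OF min1]])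
      (auto simp: concat_family_def)
  have f2: "f2 \<in> Vspan (m + n) ?H"
    unfolding f2_def by (rule Vspan_shift[where j = m, OF _ _ argminV_in_Vspan[OF min2]])
      (auto simp: concat_family_def)
  have mid: "(\<lambda>x. (1/2) *\<^sub>R f1 x + (1/2) *\<^sub>R f2 x) \<in> Vspan (m + n) ?H"
    and diff: "(\<lambda>x. 1 *\<^sub>R f1 x + (-1) *\<^sub>R f2 x) \<in> Vspan (m + n) ?H"
    using f1 f2 by (rule Vspan_lincomb)+
  have "riskV P L (m + n) ?H \<le> risk P L (\<lambda>x. (1/2) *\<^sub>R f1 x + (1/2) *\<^sub>R f2 x)"
    using argminV_minimal[OF min12 mid] riskV_eq_risk_argminV[OF min12] by simp
  also have "\<dots> \<le> (risk P L f1 + risk P L f2) / 2 - \<mu> / 8 * Dist P f1 f2"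
    by (rule risk_midpoint_le[OF sc]) (use integ[OF f1] integ[OF f2] integ[OF mid] integ[OF diff] in auto)
  finally have "riskV P L (m + n) ?H \<le> (risk P L f1 + risk P L f2) / 2 - \<mu> / 8 * Dist P f1 f2" .
  moreover have "risk P L f1 = riskV P L m G" "risk P L f2 = riskV P L n G'"
    unfolding f1_def f2_def by (simp_all add: riskV_eq_risk_argminV min1 min2)
  ultimately show ?thesis
    using sc unfolding f1_def f2_def strongly_convex_loss_def by (simp add: field_simps)
qed

definition shift_family :: "nat \<Rightarrow> nat \<Rightarrow> (nat \<Rightarrow> 'a) \<Rightarrow> nat \<Rightarrow> 'a" where
  "shift_family m n G = (\<lambda>i\<in>{m..<m + n}. G (i - m))"

lemma concat_family_eq_merge:
  "case_prod (concat_family m n) = merge {..<m} {m..<m + n} \<circ> map_prod id (shift_family m n)"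
  by (auto simp: fun_eq_iff concat_family_def shift_family_def merge_def)

lemma measurable_shift_family [measurable]:
  "shift_family m n \<in> PiM {..<n} (\<lambda>_. M) \<rightarrow>\<^sub>M PiM {m..<m + n} (\<lambda>_. M)"
  unfolding shift_family_def by (intro measurable_restrict measurable_component_singleton) auto

lemma distr_shift_family_PiM:
  assumes "prob_space M"
  shows "distr (PiM {..<n} (\<lambda>_. M)) (PiM {m..<m + n} (\<lambda>_. M)) (shift_family m n)
    = PiM {m..<m + n} (\<lambda>_. M)"
proof -
  have "inj_on (\<lambda>i. i - m) {m..<m + n}" "(\<lambda>i. i - m) \<in> {m..<m + n} \<rightarrow> {..<n}"
    by (auto simp: inj_on_def)
  then show ?thesis
    unfolding shift_family_def using assms by (intro distr_PiM_reindex)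
qed

lemma measurable_merge_blocks:
  fixes m n :: nat
  shows "merge {..<m} {m..<m + n}
    \<in> PiM {..<m} (\<lambda>_. M) \<Otimes>\<^sub>M PiM {m..<m + n} (\<lambda>_. M) \<rightarrow>\<^sub>M PiM {..<m + n} (\<lambda>_. M)"
proof -
  have "{..<m} \<union> {m..<m + n} = {..<m + n}"
    by auto
  then show ?thesis
    using measurable_merge[of "{..<m}" "{m..<m + n}" "\<lambda>_. M"] by simp
qed

lemma measurable_concat_family:
  "case_prod (concat_family m n)
    \<in> PiM {..<m} (\<lambda>_. M) \<Otimes>\<^sub>M PiM {..<n} (\<lambda>_. M) \<rightarrow>\<^sub>M PiM {..<m + n} (\<lambda>_. M)"
proof -
  have "map_prod id (shift_family m n)
      \<in> PiM {..<m} (\<lambda>_. M) \<Otimes>\<^sub>M PiM {..<n} (\<lambda>_. M) \<rightarrow>\<^sub>M PiM {..<m} (\<lambda>_. M) \<Otimes>\<^sub>M PiM {m..<m + n} (\<lambda>_. M)"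
    unfolding map_prod_def id_def by measurable
  then show ?thesis
    unfolding concat_family_eq_merge using measurable_merge_blocks by (rule measurable_comp)
qed

lemma distr_concat_family_PiM:
  assumes M: "prob_space M"
  shows "distr (PiM {..<m} (\<lambda>_. M) \<Otimes>\<^sub>M PiM {..<n} (\<lambda>_. M)) (PiM {..<m + n} (\<lambda>_. M))
      (case_prod (concat_family m n))
    = PiM {..<m + n} (\<lambda>_. M)"
proof -
  interpret M: prob_space M by (rule M)
  interpret product_prob_space "\<lambda>_. M" by unfold_locales
  let ?A = "PiM {..<m} (\<lambda>_. M)" and ?B = "PiM {..<n} (\<lambda>_. M)" and ?C = "PiM {m..<m + n} (\<lambda>_. M)"
  have union: "{..<m} \<union> {m..<m + n} = {..<m + n}" and disjoint: "{..<m} \<inter> {m..<m + n} = {}"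
    by auto
  have shift: "map_prod id (shift_family m n) \<in> ?A \<Otimes>\<^sub>M ?B \<rightarrow>\<^sub>M ?A \<Otimes>\<^sub>M ?C"
    unfolding map_prod_def id_def by measurable
  have "distr (?A \<Otimes>\<^sub>M ?B) (?A \<Otimes>\<^sub>M ?C) (map_prod id (shift_family m n)) = ?A \<Otimes>\<^sub>M ?C"
    using pair_measure_distr[of "\<lambda>x. x" ?A ?A "shift_family m n" ?B ?C] distr_shift_family_PiM[OF M]
    by (simp add: map_prod_def distr_id prob_space_imp_sigma_finite prob_space_PiM M)
  moreover have "distr (?A \<Otimes>\<^sub>M ?C) (PiM {..<m + n} (\<lambda>_. M)) (merge {..<m} {m..<m + n})
      = PiM {..<m + n} (\<lambda>_. M)"
    using distr_merge[OF disjoint] union by simp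
  ultimately show ?thesis
    unfolding concat_family_eq_merge by (simp add: distr_distr[OF measurable_merge_blocks shift, symmetric])
qed

lemma distr_pair_snd:
  assumes M: "prob_space M" and N: "sigma_finite_measure N"
  shows "distr (M \<Otimes>\<^sub>M N) N snd = N"
proof -
  interpret pair_sigma_finite N M
    using M N by (simp add: pair_sigma_finite_def prob_space_imp_sigma_finite)
  have "distr (M \<Otimes>\<^sub>M N) N snd = distr (distr (M \<Otimes>\<^sub>M N) (N \<Otimes>\<^sub>M M) (\<lambda>(x, y). (y, x))) N fst"
    by (subst distr_distr) (auto simp: comp_def split_beta')
  also have "\<dots> = distr (N \<Otimes>\<^sub>M M) N fst"
    by (simp flip: distr_pair_swap)
  also have "\<dots> = N"
    using M by (rule prob_space.distr_pair_fst)
  finally show ?thesis .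
qed

lemma
  fixes f :: "'b \<Rightarrow> 'c::{banach, second_countable_topology}"
  assumes T: "T \<in> M \<rightarrow>\<^sub>M N" and distr: "distr M N T = N" and f: "integrable N f"
  shows integrable_measure_preserving: "integrable M (\<lambda>x. f (T x))"
    and integral_measure_preserving: "(\<integral>x. f (T x) \<partial>M) = integral\<^sup>L N f"
proof -
  have f_meas: "f \<in> borel_measurable N"
    using f by simp
  show "integrable M (\<lambda>x. f (T x))"
    using integrable_distr_eq[OF T f_meas] f unfolding distr by simp
  show "(\<integral>x. f (T x) \<partial>M) = integral\<^sup>L N f"
    using integral_distr[OF T f_meas] unfolding distr by simp
qed

lemma
  fixes f :: "'a \<Rightarrow> 'c::{banach, second_countable_topology}"
  assumes N: "prob_space N" and f: "integrable M f"
  shows integrable_pair_fst: "integrable (M \<Otimes>\<^sub>M N) (\<lambda>z. f (fst z))"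
    and integral_pair_fst: "(\<integral>z. f (fst z) \<partial>(M \<Otimes>\<^sub>M N)) = integral\<^sup>L M f"
  using integrable_measure_preserving[OF measurable_fst prob_space.distr_pair_fst[OF N] f]
    integral_measure_preserving[OF measurable_fst prob_space.distr_pair_fst[OF N] f] .

lemma
  fixes f :: "'b \<Rightarrow> 'c::{banach, second_countable_topology}"
  assumes M: "prob_space M" and N: "sigma_finite_measure N" and f: "integrable N f"
  shows integrable_pair_snd: "integrable (M \<Otimes>\<^sub>M N) (\<lambda>z. f (snd z))"
    and integral_pair_snd: "(\<integral>z. f (snd z) \<partial>(M \<Otimes>\<^sub>M N)) = integral\<^sup>L N f"
  using integrable_measure_preserving[OF measurable_snd distr_pair_snd[OF M N] f]
    integral_measure_preserving[OF measurable_snd distr_pair_snd[OF M N] f] .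

lemma
  fixes f :: "(nat \<Rightarrow> 'a) \<Rightarrow> 'c::{banach, second_countable_topology}"
  assumes M: "prob_space M" and f: "integrable (PiM {..<m + n} (\<lambda>_. M)) f"
  shows integrable_concat_family:
      "integrable (PiM {..<m} (\<lambda>_. M) \<Otimes>\<^sub>M PiM {..<n} (\<lambda>_. M)) (\<lambda>(G, G'). f (concat_family m n G G'))"
    and integral_concat_family:
      "(\<integral>(G, G'). f (concat_family m n G G') \<partial>(PiM {..<m} (\<lambda>_. M) \<Otimes>\<^sub>M PiM {..<n} (\<lambda>_. M)))
        = integral\<^sup>L (PiM {..<m + n} (\<lambda>_. M)) f"
  using integrable_measure_preserving[OF measurable_concat_family distr_concat_family_PiM[OF M] f]
    integral_measure_preserving[OF measurable_concat_family distr_concat_family_PiM[OF M] f]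
  by (simp_all add: split_beta')

lemma nn_integral_le_integral:
  assumes g: "integrable M g"
    and nonneg: "\<And>x. x \<in> space M \<Longrightarrow> 0 \<le> f x" and le: "\<And>x. x \<in> space M \<Longrightarrow> f x \<le> g x"
  shows "(\<integral>\<^sup>+x. ennreal (f x) \<partial>M) \<le> ennreal (integral\<^sup>L M g)"
proof -
  have "(\<integral>\<^sup>+x. ennreal (f x) \<partial>M) \<le> (\<integral>\<^sup>+x. ennreal (g x) \<partial>M)"
    by (intro nn_integral_mono ennreal_leI le)
  also have "\<dots> = ennreal (integral\<^sup>L M g)"
    using nonneg le by (intro nn_integral_eq_integral g AE_I2) (blast intro: order_trans)
  finally show ?thesis .
qed

theorem theorem5:
  fixes P :: "('x \<times> 'y) measure"
    and L :: "'y \<Rightarrow> real^'d \<Rightarrow> real"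
    and gL :: "'y \<Rightarrow> real^'d \<Rightarrow> real^'d"
    and Q :: "('x \<Rightarrow> real^'d) measure"
    and \<mu> :: real and k :: nat
  assumes "prob_space P" and "prob_space Q"
    and diff: "\<And>y p. (L y has_derivative (\<lambda>h. inner (gL y p) h)) (at p)"
    and cont: "\<And>y. continuous_on UNIV (gL y)"
    and sc: "strongly_convex_loss \<mu> L gL"
    and "k \<ge> 1"
    and integ: "\<And>t G f. (\<forall>i<t. G i \<in> space Q) \<Longrightarrow> f \<in> Vspan t G \<Longrightarrow>
        integrable P (\<lambda>z. L (snd z) (f (fst z))) \<and>
        integrable P (\<lambda>z. (norm (f (fst z)))\<^sup>2)"
    and minex: "\<And>t G. (\<forall>i<t. G i \<in> space Q) \<Longrightarrow>
        \<exists>f\<in>Vspan t G. \<forall>h\<in>Vspan t G. risk P L f \<le> risk P L h"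
    and intk: "integrable (PiM {..<k} (\<lambda>_. Q)) (riskV P L k)"
    and int2k: "integrable (PiM {..<2*k} (\<lambda>_. Q)) (riskV P L (2*k))"
  shows "(\<integral>\<^sup>+ GG. ennreal (Dist P (argminV P L k (fst GG)) (argminV P L k (snd GG)))
            \<partial>(PiM {..<k} (\<lambda>_. Q) \<Otimes>\<^sub>M PiM {..<k} (\<lambda>_. Q)))
         \<le> ennreal (8 / \<mu> * (Rbar P L Q k - Rbar P L Q (2*k)))"
proof -
  let ?M = "PiM {..<k} (\<lambda>_. Q)"
  have prob_M: "prob_space ?M"
    by (simp add: prob_space_PiM \<open>prob_space Q\<close>)
  have in_space: "\<forall>i<t. G i \<in> space Q" if "G \<in> space (PiM {..<t} (\<lambda>_. Q))" for t G
    using that by (auto simp: space_PiM)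
  define gap where "gap = (\<lambda>(G, G').
    4 / \<mu> * (riskV P L k G + riskV P L k G' - 2 * riskV P L (k + k) (concat_family k k G G')))"
  have bound: "Dist P (argminV P L k G) (argminV P L k G') \<le> gap (G, G')"
    if "(G, G') \<in> space (?M \<Otimes>\<^sub>M ?M)" for G G'
  proof -
    have "G \<in> space ?M" "G' \<in> space ?M" "concat_family k k G G' \<in> space (PiM {..<k + k} (\<lambda>_. Q))"
      using that measurable_space[OF measurable_concat_family that] by (auto simp: space_pair_measure)
    then show ?thesis
      unfolding gap_def prod.case by (intro Dist_argminV_le_riskV_gap[OF sc integ minex minex minex] in_space)
  qed
  have gap_int: "integrable (?M \<Otimes>\<^sub>M ?M) gap"
    and gap_val: "integral\<^sup>L (?M \<Otimes>\<^sub>M ?M) gap = 8 / \<mu> * (Rbar P L Q k - Rbar P L Q (2*k))"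
    using integrable_pair_fst[OF prob_M intk] integral_pair_fst[OF prob_M intk]
      integrable_pair_snd[OF prob_M prob_space_imp_sigma_finite[OF prob_M] intk]
      integral_pair_snd[OF prob_M prob_space_imp_sigma_finite[OF prob_M] intk]
      integrable_concat_family[OF \<open>prob_space Q\<close> int2k[unfolded mult_2]]
      integral_concat_family[OF \<open>prob_space Q\<close> int2k[unfolded mult_2]]
    unfolding gap_def Rbar_def mult_2 by (simp_all add: split_beta' algebra_simps)
  show ?thesis
    unfolding gap_val[symmetric]
    by (rule nn_integral_le_integral[OF gap_int]) (simp add: Dist_def, simp add: split_paired_all bound)
qed

end
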